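(* Let $n\ge5$, let $\{C_i,C_j,C_k\}$ be a critical triplet in $\mathcal C_{[n]}$, let $C\in\mathcal C_{[n]}$ with $C>F_{ijk}$, and let $A\in \hat S([n])$ with $A\gtrdot F_{ijk}$. Then $C$ covers $A$ in $\hat S([n])$ if and only if the edge $e(C)$ is incident to the vertex $v(A)$ in the tree $T(F_{ijk})$.
   Context: An $X$-tree is a pair $(T,\phi)$ with $T$ a finite tree and $\phi:X\to V(T)$ a map such that every vertex not in $\phi(X)$ has degree at least $3$; a vertex is labeled if it lies in $\phi(X)$. An $X$-forest is a set $\{(A,\mathcal T_A):A\in\pi\}$ where $\pi$ is a set partition of $X$ and each $\mathcal T_A$ is an $A$-tree. Contracting an edge $e=(u,v)$ removes $e$ and identifies $u,v$, the new vertex carrying the union of the labels. Deleting $e$ removes it without changing vertices; it is safe if each of $u,v$ is labeled or has degree greater than $3$. The Tuffley poset $S(X)$ is the set of $X$-forests with $\mathcal F'\le\mathcal F$ iff $\mathcal F'$ is obtained from $\mathcal F$ by a sequence of contractions and safe deletions; covers are single contractions or safe deletions. $\hat S(X)=S(X)\cup\{\hat0,\hat1\}$. $\mathcal C_{X}$ is the set of maximal elements of $S(X)$: trees with leaves labeled bijectively by $X$ and internal vertices unlabeled of degree $3$. Here $X=[n]$. NNI: for $C\in\mathcal C_X$ and an internal edge $\alpha=(u,v)$ separating subtrees $A,B$ at $u$ from $C',D$ at $v$, swapping $B$ with $C'$ or $B$ with $D$ is a nearest neighbor interchange over $\alpha$. A critical triplet is a triple $\{C_i,C_j,C_k\}$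 of elements of $\mathcal C_{[n]}$ such that: (1) $C_i$ has a leaf labeled $x$ whose leaf edge $e_x$ is adjacent to two internal edges $e_{x_1}$ and $e_{x_2}$; (2) $C_j\neq C_i$ and both $C_i,C_j$ cover $F_j$, the element obtained from $C_i$ by contracting $e_{x_1}$; (3) $C_k\ne C_i$ and both $C_i,C_k$ cover $F_k$, obtained from $C_i$ by contracting $e_{x_2}$. The element $F_{ijk}$ is obtained from $F_j$ by (safely) deleting the edge incident to the vertex labeled $x$ (equivalently, obtained in the same way from $F_k$); it consists of an isolated vertex labeled $x$ together with an $([n]\setminus\{x\})$-tree, denoted $T(F_{ijk})$. Every $A\gtrdot F_{ijk}$ in $\hat S([n])$ is obtained from $F_{ijk}$ by adding an edge between the isolated vertex $x$ and a unique vertex of $T(F_{ijk})$, denoted $v(A)$. Every $C\in\mathcal C_{[n]}$ with $C>F_{ijk}$ is obtained from $F_{ijk}$ by subdividing a unique edge of $T(F_{ijk})$, denoted $e(C)$, with a new vertex and joining that new vertex by an edge to the isolated vertex $x$. *)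

theory Defs
  imports Main
begin

text \<open>An X-forest is encoded as one finite graph (a disjoint union of trees) on
natural-number vertices, with a labelling map (only its values on X matter).
The trees of the forest are its connected components; the partition of X is
given by which labels lie in the same component.\<close>

record xf =
  verts :: "nat set"
  edges :: "nat set set"
  lab   :: "nat \<Rightarrow> nat"

definition degree :: "xf \<Rightarrow> nat \<Rightarrow> nat" where
  "degree F v = card {e \<in> edges F. v \<in> e}"

definition labeled :: "nat set \<Rightarrow> xf \<Rightarrow> nat \<Rightarrow> bool" where
  "labeled X F v \<longleftrightarrow> v \<in> lab F ` X"

definition reach :: "nat set set \<Rightarrow> nat \<Rightarrow> nat \<Rightarrow> bool" where
  "reach E = (\<lambda>a b. {a, b} \<in> E \<and> a \<noteq> b)\<^sup>*\<^sup>*"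

definition is_forest_graph :: "xf \<Rightarrow> bool" where
  "is_forest_graph F \<longleftrightarrow> finite (verts F) \<and>
     (\<forall>e\<in>edges F. \<exists>u v. u \<noteq> v \<and> e = {u, v} \<and> u \<in> verts F \<and> v \<in> verts F) \<and>
     (\<forall>u v. {u, v} \<in> edges F \<longrightarrow> u \<noteq> v \<longrightarrow> \<not> reach (edges F - {{u, v}}) u v)"

text \<open>X-forest: each component is an A-tree for the block A of labels it carries
(every component carries a label, so blocks are nonempty), unlabelled vertices
have degree at least 3.\<close>
definition xforest :: "nat set \<Rightarrow> xf \<Rightarrow> bool" where
  "xforest X F \<longleftrightarrow> is_forest_graph F \<and> lab F ` X \<subseteq> verts F \<and>
     (\<forall>v\<in>verts F. \<not> labeled X F v \<longrightarrow> degree F v \<ge> 3) \<and>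
     (\<forall>v\<in>verts F. \<exists>y\<in>X. reach (edges F) v (lab F y))"

definition fiso :: "nat set \<Rightarrow> xf \<Rightarrow> xf \<Rightarrow> bool" where
  "fiso X F G \<longleftrightarrow> (\<exists>f. bij_betw f (verts F) (verts G) \<and>
     edges G = (\<lambda>e. f ` e) ` edges F \<and> (\<forall>y\<in>X. f (lab F y) = lab G y))"

definition contract :: "xf \<Rightarrow> nat \<Rightarrow> nat \<Rightarrow> xf" where
  "contract F u v =
     (let r = (\<lambda>w. if w = v then u else w) in
      \<lparr> verts = verts F - {v},
        edges = (\<lambda>e. r ` e) ` (edges F - {{u, v}}),
        lab = r \<circ> lab F \<rparr>)"

definition delete :: "xf \<Rightarrow> nat \<Rightarrow> nat \<Rightarrow> xf" where
  "delete F u v = F\<lparr> edges := edges F - {{u, v}} \<rparr>"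

definition safe_del :: "nat set \<Rightarrow> xf \<Rightarrow> nat \<Rightarrow> nat \<Rightarrow> bool" where
  "safe_del X F u v \<longleftrightarrow> (labeled X F u \<or> degree F u > 3) \<and> (labeled X F v \<or> degree F v > 3)"

definition step :: "nat set \<Rightarrow> xf \<Rightarrow> xf \<Rightarrow> bool" where
  "step X F' F \<longleftrightarrow> (\<exists>u v. u \<noteq> v \<and> {u, v} \<in> edges F \<and>
      (F' = contract F u v \<or> (safe_del X F u v \<and> F' = delete F u v)))"

text \<open>Order of the Tuffley poset, on representatives (elements are iso classes).\<close>
definition fle :: "nat set \<Rightarrow> xf \<Rightarrow> xf \<Rightarrow> bool" where
  "fle X F' F \<longleftrightarrow> (\<exists>G. (step X)\<^sup>*\<^sup>* G F \<and> fiso X G F')"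

definition flt :: "nat set \<Rightarrow> xf \<Rightarrow> xf \<Rightarrow> bool" where
  "flt X F' F \<longleftrightarrow> fle X F' F \<and> \<not> fiso X F' F"

definition in_CX :: "nat set \<Rightarrow> xf \<Rightarrow> bool" where
  "in_CX X C \<longleftrightarrow> xforest X C \<and> \<not> (\<exists>G. xforest X G \<and> flt X C G)"

datatype 'a hat = Bot | Elem 'a | Top

definition in_hat :: "nat set \<Rightarrow> xf hat \<Rightarrow> bool" where
  "in_hat X a \<longleftrightarrow> (\<forall>p. a = Elem p \<longrightarrow> xforest X p)"

fun hle :: "nat set \<Rightarrow> xf hat \<Rightarrow> xf hat \<Rightarrow> bool" where
  "hle X Bot b = True"
| "hle X a Top = True"
| "hle X (Elem p) (Elem q) = fle X p q"
| "hle X _ _ = False"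

fun heq :: "nat set \<Rightarrow> xf hat \<Rightarrow> xf hat \<Rightarrow> bool" where
  "heq X Bot Bot = True"
| "heq X Top Top = True"
| "heq X (Elem p) (Elem q) = fiso X p q"
| "heq X _ _ = False"

definition hlt :: "nat set \<Rightarrow> xf hat \<Rightarrow> xf hat \<Rightarrow> bool" where
  "hlt X a b \<longleftrightarrow> hle X a b \<and> \<not> heq X a b"

definition hcovers :: "nat set \<Rightarrow> xf hat \<Rightarrow> xf hat \<Rightarrow> bool" where
  "hcovers X a b \<longleftrightarrow> in_hat X a \<and> in_hat X b \<and> hlt X b a \<and>
     \<not> (\<exists>c. in_hat X c \<and> hlt X b c \<and> hlt X c a)"

definition internal_edge :: "xf \<Rightarrow> nat set \<Rightarrow> bool" where
  "internal_edge C e \<longleftrightarrow> e \<in> edges C \<and> (\<forall>v\<in>e. degree C v \<noteq> 1)"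

text \<open>Critical triplet {Ci,Cj,Ck}: leaf lab Ci x with leaf edge {lab x, w};
the two internal edges adjacent to it are {w,a} (e_x1) and {w,b} (e_x2).\<close>
definition critical_triplet ::
  "nat set \<Rightarrow> xf \<Rightarrow> xf \<Rightarrow> xf \<Rightarrow> nat \<Rightarrow> nat \<Rightarrow> nat \<Rightarrow> nat \<Rightarrow> bool" where
  "critical_triplet X Ci Cj Ck x w a b \<longleftrightarrow>
     in_CX X Ci \<and> in_CX X Cj \<and> in_CX X Ck \<and> x \<in> X \<and>
     degree Ci (lab Ci x) = 1 \<and> {lab Ci x, w} \<in> edges Ci \<and> lab Ci x \<noteq> w \<and>
     internal_edge Ci {w, a} \<and> internal_edge Ci {w, b} \<and> w \<noteq> a \<and> w \<noteq> b \<and> a \<noteq> b \<and>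
     \<not> fiso X Cj Ci \<and>
     hcovers X (Elem Ci) (Elem (contract Ci w a)) \<and> hcovers X (Elem Cj) (Elem (contract Ci w a)) \<and>
     \<not> fiso X Ck Ci \<and>
     hcovers X (Elem Ci) (Elem (contract Ci w b)) \<and> hcovers X (Elem Ck) (Elem (contract Ci w b))"

text \<open>F_ijk: from F_j = contract e_x1, delete the edge at the vertex labelled x.\<close>
definition Fijk :: "xf \<Rightarrow> nat \<Rightarrow> nat \<Rightarrow> nat \<Rightarrow> xf" where
  "Fijk Ci x w a = delete (contract Ci w a) (lab (contract Ci w a) x) w"

definition add_edge :: "xf \<Rightarrow> nat \<Rightarrow> nat \<Rightarrow> xf" where
  "add_edge F p v = F\<lparr> edges := insert {p, v} (edges F) \<rparr>"

definition subdiv_attach :: "xf \<Rightarrow> nat \<Rightarrow> nat \<Rightarrow> nat \<Rightarrow> nat \<Rightarrow> xf" where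
  "subdiv_attach F p u1 u2 z =
     F\<lparr> verts := insert z (verts F),
        edges := (edges F - {{u1, u2}}) \<union> {{u1, z}, {z, u2}, {z, p}} \<rparr>"

end

theory Submission
  imports Defs
begin

text \<open>Both C and the forest A arise from F_ijk by reattaching the isolated leaf x: C by
  hanging x from a new vertex z subdividing e(C) = u1 u2, A by joining x to v(A) = v.
  A step of the poset removes an edge, so C covers A exactly when A is obtained from C
  by one contraction or safe deletion (up to isomorphism). Contracting z u1 or z u2
  gives A with v = u1 resp. u2. Contracting z x gives x degree 2, while x is a leaf of A.
  Every other step leaves x pendant at an unlabelled vertex of degree at most 3, which
  an isomorphism onto A, fixing x, would send to v; but then v is unlabelled, so it
  has degree at least 3 in F_ijk and at least 4 in A. Finally, labelled forests have no
  nontrivial label-preserving automorphisms, so the reattachment point v is determined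
  by A.\<close>

text \<open>The graphs met along a chain of steps need not be X-forests; wf_xf is the weaker
  invariant that every contraction and deletion preserves.\<close>

definition wf_xf :: "nat set \<Rightarrow> xf \<Rightarrow> bool" where
  "wf_xf X H \<longleftrightarrow> finite (verts H) \<and> (\<forall>e\<in>edges H. e \<subseteq> verts H) \<and> lab H ` X \<subseteq> verts H"

definition iso_via :: "nat set \<Rightarrow> (nat \<Rightarrow> nat) \<Rightarrow> xf \<Rightarrow> xf \<Rightarrow> bool" where
  "iso_via X f F G \<longleftrightarrow> bij_betw f (verts F) (verts G) \<and>
     edges G = (\<lambda>e. f ` e) ` edges F \<and> (\<forall>y\<in>X. f (lab F y) = lab G y)"

lemma fiso_iff_iso_via: "fiso X F G \<longleftrightarrow> (\<exists>f. iso_via X f F G)"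
  unfolding fiso_def iso_via_def by simp

lemma wf_xf_finite_edges: "wf_xf X H \<Longrightarrow> finite (edges H)"
  unfolding wf_xf_def by (meson Pow_iff finite_Pow_iff finite_subset subsetI)

lemma xforest_edge_doubleton:
  "xforest X H \<Longrightarrow> e \<in> edges H \<Longrightarrow> \<exists>u v. u \<noteq> v \<and> e = {u, v} \<and> u \<in> verts H \<and> v \<in> verts H"
  unfolding xforest_def is_forest_graph_def by (elim conjE) (drule bspec, assumption)

lemma xforest_wf_xf: "xforest X H \<Longrightarrow> wf_xf X H"
proof -
  assume a: "xforest X H"
  have "\<forall>e\<in>edges H. e \<subseteq> verts H"
  proof
    fix e assume "e \<in> edges H"
    then obtain u v where "e = {u,v}" "u \<in> verts H" "v \<in> verts H" using xforest_edge_doubleton[OF a] by blast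
    then show "e \<subseteq> verts H" by simp
  qed
  moreover have "finite (verts H)" "lab H ` X \<subseteq> verts H" using a unfolding xforest_def is_forest_graph_def by simp_all
  ultimately show ?thesis unfolding wf_xf_def by simp
qed

lemma wf_xf_contract: "wf_xf X H \<Longrightarrow> u \<in> verts H \<Longrightarrow> u \<noteq> v \<Longrightarrow> wf_xf X (contract H u v)"
  unfolding wf_xf_def contract_def Let_def by auto

lemma wf_xf_delete: "wf_xf X H \<Longrightarrow> wf_xf X (delete H u v)"
  unfolding wf_xf_def delete_def by auto

lemma contract_simps:
  "verts (contract H u v) = verts H - {v}"
  "edges (contract H u v) = (\<lambda>e. (\<lambda>w. if w = v then u else w) ` e) ` (edges H - {{u,v}})"
  "lab (contract H u v) = (\<lambda>w. if w = v then u else w) \<circ> lab H"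
  by (simp_all add: contract_def Let_def)

lemma delete_simps:
  "verts (delete H u v) = verts H" "edges (delete H u v) = edges H - {{u,v}}" "lab (delete H u v) = lab H"
  by (simp_all add: delete_def)

lemma add_edge_simps:
  "verts (add_edge H u v) = verts H" "edges (add_edge H u v) = insert {u,v} (edges H)" "lab (add_edge H u v) = lab H"
  by (simp_all add: add_edge_def)

lemma subdiv_attach_simps:
  "verts (subdiv_attach F p u1 u2 z) = insert z (verts F)"
  "edges (subdiv_attach F p u1 u2 z) = (edges F - {{u1, u2}}) \<union> {{u1, z}, {z, u2}, {z, p}}"
  "lab (subdiv_attach F p u1 u2 z) = lab F"
  by (simp_all add: subdiv_attach_def)

lemma contract_edges_at_other:
  assumes "y \<noteq> s" "y \<noteq> t"
  shows "{e \<in> edges (contract H s t). y \<in> e} =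
    (\<lambda>e. (\<lambda>w. if w = t then s else w) ` e) ` {e \<in> edges H - {{s,t}}. y \<in> e}"
proof -
  have "y \<in> (\<lambda>w. if w = t then s else w) ` e \<longleftrightarrow> y \<in> e" for e using assms by force
  then show ?thesis unfolding contract_simps by blast
qed

lemma step_wf_card_edges_less:
  assumes "step X G H" "wf_xf X H"
  shows "wf_xf X G \<and> card (edges G) < card (edges H)"
proof -
  obtain u v where uv: "u \<noteq> v" "{u,v} \<in> edges H"
    "G = contract H u v \<or> (safe_del X H u v \<and> G = delete H u v)"
    using assms(1) unfolding step_def by blast
  have fin: "finite (edges H)" using assms(2) wf_xf_finite_edges by blast
  have u: "u \<in> verts H" using uv(2) assms(2) unfolding wf_xf_def by blast
  have lt: "card (edges H - {{u,v}}) < card (edges H)"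
    using fin uv(2) by (rule card_Diff1_less)
  show ?thesis
  proof (cases "G = contract H u v")
    case True
    have "card (edges G) \<le> card (edges H - {{u,v}})"
      unfolding True contract_def Let_def by (simp add: card_image_le fin)
    then show ?thesis using lt True wf_xf_contract[OF assms(2) u uv(1)] by simp
  next
    case False
    then have "G = delete H u v" using uv(3) by blast
    then show ?thesis using lt wf_xf_delete[OF assms(2)] by (simp add: delete_def)
  qed
qed

lemma steps_wf_card_edges:
  assumes "(step X)\<^sup>*\<^sup>* G H" "wf_xf X H"
  shows "wf_xf X G \<and> (G = H \<or> card (edges G) < card (edges H))"
  using assms(1)
proof (induction rule: converse_rtranclp_induct)
  case base
  then show ?case using assms(2) by simp
next
  case (step y z)
  have "wf_xf X y \<and> card (edges y) < card (edges z)" using step_wf_card_edges_less[OF step(1)] step(3) by blast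
  then show ?case using step(3) by auto
qed

lemma iso_via_comp: "iso_via X f H1 H2 \<Longrightarrow> iso_via X g H2 H3 \<Longrightarrow> iso_via X (g \<circ> f) H1 H3"
  unfolding iso_via_def by (auto simp: bij_betw_trans image_comp image_image)

lemma iso_via_inv:
  assumes "wf_xf X H1" "iso_via X f H1 H2"
  shows "iso_via X (inv_into (verts H1) f) H2 H1"
proof -
  have b: "bij_betw f (verts H1) (verts H2)" and e: "edges H2 = (\<lambda>e. f ` e) ` edges H1"
    and l: "\<forall>y\<in>X. f (lab H1 y) = lab H2 y" using assms(2) unfolding iso_via_def by auto
  have inj: "inj_on f (verts H1)" using b bij_betw_def by blast
  have sub: "\<forall>e\<in>edges H1. e \<subseteq> verts H1" "lab H1 ` X \<subseteq> verts H1" using assms(1) unfolding wf_xf_def by auto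
  have c: "\<And>e. e \<in> edges H1 \<Longrightarrow> inv_into (verts H1) f ` f ` e = e"
    using sub(1) inj by (simp add: inv_into_image_cancel)
  have "(\<lambda>e. inv_into (verts H1) f ` e) ` edges H2 = (\<lambda>e. inv_into (verts H1) f ` f ` e) ` edges H1"
    unfolding e by (rule image_image)
  also have "\<dots> = (\<lambda>e. e) ` edges H1" by (rule image_cong) (simp_all add: c)
  finally have "(\<lambda>e. inv_into (verts H1) f ` e) ` edges H2 = edges H1" by simp
  moreover have "\<forall>y\<in>X. inv_into (verts H1) f (lab H2 y) = lab H1 y"
    using l sub(2) inj by (metis image_subset_iff inv_into_f_f)
  ultimately show ?thesis unfolding iso_via_def using bij_betw_inv_into[OF b] by simp
qed

lemma iso_via_card_edges:
  assumes "wf_xf X H1" "iso_via X f H1 H2"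
  shows "card (edges H2) = card (edges H1)"
proof -
  have b: "bij_betw f (verts H1) (verts H2)" and e: "edges H2 = (\<lambda>e. f ` e) ` edges H1"
    using assms(2) unfolding iso_via_def by auto
  have inj: "inj_on f (verts H1)" using b bij_betw_def by blast
  have sub: "\<forall>e\<in>edges H1. e \<subseteq> verts H1" using assms(1) unfolding wf_xf_def by auto
  have "inj_on (\<lambda>e. f ` e) (edges H1)"
    by (rule inj_onI) (use sub inj in \<open>simp add: inj_on_image_eq_iff\<close>)
  then show ?thesis unfolding e by (simp add: card_image)
qed

lemma iso_via_edges_at:
  assumes "wf_xf X H1" "iso_via X f H1 H2" "s \<in> verts H1"
  shows "{e\<in>edges H2. f s \<in> e} = (\<lambda>e. f ` e) ` {e\<in>edges H1. s \<in> e}"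
proof -
  have b: "bij_betw f (verts H1) (verts H2)" and e: "edges H2 = (\<lambda>e. f ` e) ` edges H1"
    using assms(2) unfolding iso_via_def by auto
  have inj: "inj_on f (verts H1)" using b bij_betw_def by blast
  have sub: "\<forall>e\<in>edges H1. e \<subseteq> verts H1" using assms(1) unfolding wf_xf_def by auto
  have m: "\<And>e. e \<in> edges H1 \<Longrightarrow> f s \<in> f ` e \<longleftrightarrow> s \<in> e"
    by (rule inj_on_image_mem_iff[OF inj assms(3)]) (use sub in blast)
  show ?thesis
  proof (rule set_eqI, rule iffI)
    fix e' assume "e' \<in> {e\<in>edges H2. f s \<in> e}"
    then obtain e where "e \<in> edges H1" "e' = f ` e" "f s \<in> f ` e" unfolding e by blast
    then show "e' \<in> (\<lambda>e. f ` e) ` {e\<in>edges H1. s \<in> e}" using m by blast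
  next
    fix e' assume "e' \<in> (\<lambda>e. f ` e) ` {e\<in>edges H1. s \<in> e}"
    then obtain e where "e \<in> edges H1" "e' = f ` e" "s \<in> e" by blast
    then show "e' \<in> {e\<in>edges H2. f s \<in> e}" unfolding e by blast
  qed
qed

lemma iso_via_degree:
  assumes "wf_xf X H1" "iso_via X f H1 H2" "s \<in> verts H1"
  shows "degree H2 (f s) = degree H1 s"
proof -
  have b: "bij_betw f (verts H1) (verts H2)"
    using assms(2) unfolding iso_via_def by auto
  have inj: "inj_on f (verts H1)" using b bij_betw_def by blast
  have sub: "\<forall>e\<in>edges H1. e \<subseteq> verts H1" using assms(1) unfolding wf_xf_def by auto
  have "inj_on (\<lambda>e. f ` e) {e\<in>edges H1. s \<in> e}"
    by (rule inj_onI) (use sub inj in \<open>simp add: inj_on_image_eq_iff\<close>)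
  then show ?thesis unfolding degree_def iso_via_edges_at[OF assms] by (simp add: card_image)
qed

lemma iso_via_labeled:
  assumes "wf_xf X H1" "iso_via X f H1 H2" "s \<in> verts H1"
  shows "labeled X H2 (f s) \<longleftrightarrow> labeled X H1 s"
proof -
  have b: "bij_betw f (verts H1) (verts H2)" and l: "\<forall>y\<in>X. f (lab H1 y) = lab H2 y"
    using assms(2) unfolding iso_via_def by auto
  have inj: "inj_on f (verts H1)" using b bij_betw_def by blast
  have sub: "lab H1 ` X \<subseteq> verts H1" using assms(1) unfolding wf_xf_def by auto
  show ?thesis unfolding labeled_def using l sub inj assms(3)
    by (auto simp: inj_on_eq_iff) (metis image_subset_iff inj_on_eq_iff rev_image_eqI)+
qed

lemma iso_via_edge:
  assumes "wf_xf X H1" "iso_via X f H1 H2" "s \<in> verts H1" "t \<in> verts H1"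
  shows "{f s, f t} \<in> edges H2 \<longleftrightarrow> {s, t} \<in> edges H1"
proof -
  have b: "bij_betw f (verts H1) (verts H2)" and e: "edges H2 = (\<lambda>e. f ` e) ` edges H1"
    using assms(2) unfolding iso_via_def by auto
  have inj: "inj_on f (verts H1)" using b bij_betw_def by blast
  have sub: "\<forall>e\<in>edges H1. e \<subseteq> verts H1" using assms(1) unfolding wf_xf_def by auto
  have "{f s, f t} = f ` {s,t}" by simp
  have st: "{s,t} \<subseteq> verts H1" using assms(3,4) by simp
  have q: "\<And>e. e \<in> edges H1 \<Longrightarrow> f ` e = f ` {s,t} \<longleftrightarrow> e = {s,t}"
    by (rule inj_on_image_eq_iff[OF inj]) (use sub st in blast)+
  have "{f s, f t} \<in> edges H2 \<longleftrightarrow> (\<exists>e\<in>edges H1. f ` {s,t} = f ` e)"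
    unfolding e \<open>{f s, f t} = f ` {s,t}\<close> by (rule image_iff)
  also have "\<dots> \<longleftrightarrow> (\<exists>e\<in>edges H1. e = {s,t})"
    by (rule bex_cong) (use q in auto)
  also have "\<dots> \<longleftrightarrow> {s,t} \<in> edges H1" by simp
  finally show ?thesis .
qed


lemma iso_via_edges_diff:
  assumes "wf_xf X H1" "iso_via X f H1 H2" "s \<in> verts H1" "t \<in> verts H1"
  shows "edges H2 - {{f s, f t}} = (\<lambda>e. f ` e) ` (edges H1 - {{s,t}})"
proof -
  have b: "bij_betw f (verts H1) (verts H2)" and e: "edges H2 = (\<lambda>e. f ` e) ` edges H1"
    using assms(2) unfolding iso_via_def by auto
  have inj: "inj_on f (verts H1)" using b bij_betw_def by blast
  have sub: "\<forall>e\<in>insert {s,t} (edges H1). e \<subseteq> verts H1" using assms(1,3,4) unfolding wf_xf_def by auto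
  have ii: "inj_on (\<lambda>e. f ` e) (insert {s,t} (edges H1))"
    by (rule inj_onI) (use sub inj in \<open>simp add: inj_on_image_eq_iff\<close>)
  have "(\<lambda>e. f ` e) ` (edges H1 - {{s,t}}) = (\<lambda>e. f ` e) ` edges H1 - (\<lambda>e. f ` e) ` {{s,t}}"
    by (rule inj_on_image_set_diff[OF ii]) auto
  then show ?thesis unfolding e by simp
qed

lemma iso_via_contract:
  assumes "wf_xf X H1" "iso_via X f H1 H2" "s \<in> verts H1" "t \<in> verts H1" "s \<noteq> t"
  shows "iso_via X f (contract H1 s t) (contract H2 (f s) (f t))"
proof -
  have b: "bij_betw f (verts H1) (verts H2)" and e: "edges H2 = (\<lambda>e. f ` e) ` edges H1"
    and l: "\<forall>y\<in>X. f (lab H1 y) = lab H2 y" using assms(2) unfolding iso_via_def by auto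
  have inj: "inj_on f (verts H1)" using b bij_betw_def by blast
  have sub: "\<forall>e\<in>edges H1. e \<subseteq> verts H1" "lab H1 ` X \<subseteq> verts H1" using assms(1) unfolding wf_xf_def by auto
  define r1 where "r1 = (\<lambda>w. if w = t then s else w)"
  define r2 where "r2 = (\<lambda>w. if w = f t then f s else w)"
  have comm: "\<And>w. w \<in> verts H1 \<Longrightarrow> r2 (f w) = f (r1 w)"
    unfolding r1_def r2_def using inj assms(4) by (auto simp: inj_on_eq_iff)
  have bv: "bij_betw f (verts H1 - {t}) (verts H2 - {f t})"
  proof -
    have "inj_on f (verts H1 - {t})" using inj by (rule inj_on_subset) auto
    moreover have "f ` (verts H1 - {t}) = f ` verts H1 - f ` {t}"
      by (rule inj_on_image_set_diff[OF inj]) (use assms(4) in auto)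
    ultimately show ?thesis using b unfolding bij_betw_def by simp
  qed
  have ed: "edges (contract H2 (f s) (f t)) = (\<lambda>e. f ` e) ` edges (contract H1 s t)"
  proof -
    have "edges (contract H2 (f s) (f t)) = (\<lambda>e. r2 ` e) ` ((\<lambda>e. f ` e) ` (edges H1 - {{s,t}}))"
      unfolding contract_simps r2_def iso_via_edges_diff[OF assms(1-4)] by simp
    also have "\<dots> = (\<lambda>e. r2 ` f ` e) ` (edges H1 - {{s,t}})" by (simp add: image_image)
    also have "\<dots> = (\<lambda>e. f ` r1 ` e) ` (edges H1 - {{s,t}})"
    proof (rule image_cong[OF refl])
      fix e assume "e \<in> edges H1 - {{s,t}}"
      then have "e \<subseteq> verts H1" using sub by auto
      then show "r2 ` f ` e = f ` r1 ` e" using comm by (auto simp: image_image image_iff) (metis comm subsetD)+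
    qed
    also have "\<dots> = (\<lambda>e. f ` e) ` edges (contract H1 s t)"
      unfolding contract_simps r1_def by (simp add: image_image)
    finally show ?thesis .
  qed
  have lb: "\<forall>y\<in>X. f (lab (contract H1 s t) y) = lab (contract H2 (f s) (f t)) y"
  proof
    fix y assume y: "y \<in> X"
    then have "lab H1 y \<in> verts H1" using sub by auto
    then have "f (r1 (lab H1 y)) = r2 (f (lab H1 y))" using comm by simp
    then show "f (lab (contract H1 s t) y) = lab (contract H2 (f s) (f t)) y"
      unfolding contract_simps r1_def r2_def using l y by simp
  qed
  show ?thesis unfolding iso_via_def using bv ed lb by (simp add: contract_simps)
qed

lemma iso_via_delete:
  assumes "wf_xf X H1" "iso_via X f H1 H2" "s \<in> verts H1" "t \<in> verts H1"
  shows "iso_via X f (delete H1 s t) (delete H2 (f s) (f t))"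
  using assms(2) iso_via_edges_diff[OF assms] unfolding iso_via_def delete_simps by simp

lemma contract_swap_iso:
  assumes "s \<in> verts H" "t \<in> verts H" "s \<noteq> t"
  shows "iso_via X (\<lambda>w. if w = t then s else w) (contract H t s) (contract H s t)"
proof -
  define phi where "phi = (\<lambda>w. if w = t then s else w)"
  have pw: "\<And>w. phi ((\<lambda>w. if w = s then t else w) w) = (\<lambda>w. if w = t then s else w) w"
    unfolding phi_def using assms(3) by auto
  have bv: "bij_betw phi (verts H - {s}) (verts H - {t})"
    unfolding bij_betw_def inj_on_def phi_def using assms by (auto simp: image_iff)
  have "edges (contract H s t) = (\<lambda>e. phi ` e) ` edges (contract H t s)"
  proof -
    have pe: "(\<lambda>x. phi (if x = s then t else x)) = (\<lambda>w. if w = t then s else w)"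
      by (rule ext) (rule pw)
    have ts: "{t,s} = {s,t}" by blast
    show ?thesis unfolding contract_simps ts image_image pe ..
  qed
  moreover have "\<forall>y\<in>X. phi (lab (contract H t s) y) = lab (contract H s t) y"
    unfolding contract_simps using pw by simp
  ultimately show ?thesis unfolding iso_via_def phi_def[symmetric] using bv by (simp add: contract_simps)
qed



fun pw :: "(nat \<Rightarrow> nat \<Rightarrow> nat) \<Rightarrow> nat \<Rightarrow> nat \<Rightarrow> nat \<times> nat" where
  "pw nx a 0 = (a, nx a a)"
lemma fiso_trans: "fiso X F G \<Longrightarrow> fiso X G H \<Longrightarrow> fiso X F H"
  unfolding fiso_iff_iso_via using iso_via_comp by blast

lemma fiso_sym: "wf_xf X F \<Longrightarrow> fiso X F G \<Longrightarrow> fiso X G F"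
  unfolding fiso_iff_iso_via using iso_via_inv by blast

lemma fiso_card_edges: "wf_xf X F \<Longrightarrow> fiso X F G \<Longrightarrow> card (edges G) = card (edges F)"
  unfolding fiso_iff_iso_via using iso_via_card_edges by blast

lemma fiso_contract_doubleton:
  assumes "{s, t} = {a, b}" "a \<in> verts H" "b \<in> verts H" "a \<noteq> b"
    and "fiso X (contract H s t) G"
  shows "fiso X (contract H a b) G"
proof -
  have "(s = a \<and> t = b) \<or> (s = b \<and> t = a)" using assms(1) by (auto simp: doubleton_eq_iff)
  then show ?thesis
  proof
    assume "s = b \<and> t = a"
    then have "fiso X (contract H a b) (contract H s t)"
      unfolding fiso_iff_iso_via using contract_swap_iso[OF assms(3,2) assms(4)[symmetric]] by blast
    then show ?thesis using assms(5) by (rule fiso_trans)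
  qed (use assms(5) in simp)
qed

lemma step_transfer_iso:
  assumes "wf_xf X H" "iso_via X f H H'" "step X G H"
  shows "\<exists>G'. step X G' H' \<and> iso_via X f G G'"
proof -
  obtain s t where st: "s \<noteq> t" "{s,t} \<in> edges H"
    "G = contract H s t \<or> (safe_del X H s t \<and> G = delete H s t)"
    using assms(3) unfolding step_def by blast
  have stV: "s \<in> verts H" "t \<in> verts H" using assms(1) st(2) unfolding wf_xf_def by auto
  have inj: "inj_on f (verts H)" using assms(2) unfolding iso_via_def bij_betw_def by blast
  have fst: "f s \<noteq> f t" using inj stV st(1) by (simp add: inj_on_eq_iff)
  have edge: "{f s, f t} \<in> edges H'" using iso_via_edge[OF assms(1,2) stV] st(2) by simp
  show ?thesis
  proof (cases "G = contract H s t")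
    case True
    then have "iso_via X f G (contract H' (f s) (f t))"
      using iso_via_contract[OF assms(1,2) stV st(1)] by simp
    moreover have "step X (contract H' (f s) (f t)) H'" unfolding step_def using fst edge by blast
    ultimately show ?thesis by blast
  next
    case False
    then have sd: "safe_del X H s t" "G = delete H s t" using st(3) by auto
    have "safe_del X H' (f s) (f t)"
      using sd(1) iso_via_labeled[OF assms(1,2)] iso_via_degree[OF assms(1,2)] stV
      unfolding safe_del_def by simp
    then have "step X (delete H' (f s) (f t)) H'" unfolding step_def using fst edge by blast
    moreover have "iso_via X f G (delete H' (f s) (f t))"
      using iso_via_delete[OF assms(1,2) stV] sd(2) by simp
    ultimately show ?thesis by blast
  qed
qed

text \<open>Every step removes an edge, so the number of edges is a strictly monotone rank
  function on the poset.\<close>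

lemma flt_card_edges_less:
  assumes "wf_xf X H" "fle X G H" "\<not> fiso X G H"
  shows "card (edges G) < card (edges H)"
proof -
  obtain G0 where G0: "(step X)\<^sup>*\<^sup>* G0 H" "fiso X G0 G" using assms(2) unfolding fle_def by blast
  have G0_wf: "wf_xf X G0" and "G0 = H \<or> card (edges G0) < card (edges H)"
    using steps_wf_card_edges[OF G0(1) assms(1)] by auto
  moreover have "G0 \<noteq> H" using G0(2) assms(3) fiso_sym[OF assms(1)] by blast
  ultimately show ?thesis using fiso_card_edges[OF G0_wf G0(2)] by simp
qed

lemma fle_card_edges_Suc_imp_step:
  assumes "wf_xf X H" "fle X G H" "card (edges H) = Suc (card (edges G))"
  shows "\<exists>G'. step X G' H \<and> fiso X G' G"
proof -
  obtain G0 where G0: "(step X)\<^sup>*\<^sup>* G0 H" "fiso X G0 G" using assms(2) unfolding fle_def by blast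
  have G0_wf: "wf_xf X G0" using steps_wf_card_edges[OF G0(1) assms(1)] by simp
  have card_G0: "card (edges G0) = card (edges G)" using fiso_card_edges[OF G0_wf G0(2)] by simp
  then have "G0 \<noteq> H" using assms(3) by auto
  then obtain y where y: "(step X)\<^sup>*\<^sup>* G0 y" "step X y H"
    using G0(1) by (blast elim: rtranclp.cases)
  have "card (edges y) < card (edges H)" using step_wf_card_edges_less[OF y(2) assms(1)] by simp
  moreover have "G0 = y \<or> card (edges G0) < card (edges y)"
    using steps_wf_card_edges[OF y(1)] step_wf_card_edges_less[OF y(2) assms(1)] by blast
  ultimately have "G0 = y" using card_G0 assms(3) by auto
  then show ?thesis using y(2) G0(2) by blast
qed

lemma hcovers_if_fle_card_edges_Suc:
  assumes H: "xforest X H" and G: "xforest X G" and le: "fle X G H"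
    and card: "card (edges H) = Suc (card (edges G))"
  shows "hcovers X (Elem H) (Elem G)"
proof -
  have H_wf: "wf_xf X H" and G_wf: "wf_xf X G" using H G by (simp_all add: xforest_wf_xf)
  have "\<not> fiso X G H" using fiso_card_edges[OF G_wf] card by fastforce
  then have lt: "hlt X (Elem G) (Elem H)" unfolding hlt_def using le by simp
  have "\<not> (hlt X (Elem G) c \<and> hlt X c (Elem H))" if c: "in_hat X c" for c
  proof (cases c)
    case (Elem K)
    then have K_wf: "wf_xf X K" using c xforest_wf_xf unfolding in_hat_def by blast
    show ?thesis
    proof
      assume "hlt X (Elem G) c \<and> hlt X c (Elem H)"
      then have "card (edges G) < card (edges K)" "card (edges K) < card (edges H)"
        using flt_card_edges_less[OF K_wf, of G] flt_card_edges_less[OF H_wf, of K] Elem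
        unfolding hlt_def by auto
      then show False using card by simp
    qed
  qed (simp_all add: hlt_def)
  then show ?thesis unfolding hcovers_def in_hat_def using lt H G by auto
qed

lemma reach_refl: "reach E a a"
  unfolding reach_def by simp

lemma reach_snoc: "reach E a b \<Longrightarrow> {b,c} \<in> E \<Longrightarrow> b \<noteq> c \<Longrightarrow> reach E a c"
  unfolding reach_def by (rule rtranclp.rtrancl_into_rtrancl) auto

lemma forest_edge_verts:
  assumes "is_forest_graph F" "{a,b} \<in> edges F"
  shows "a \<noteq> b \<and> a \<in> verts F \<and> b \<in> verts F"
proof -
  obtain u v where "u \<noteq> v" "{a,b} = {u, v}" "u \<in> verts F" "v \<in> verts F"
    using assms unfolding is_forest_graph_def by (elim conjE) (drule bspec, assumption, blast)
  then show ?thesis by (auto simp: doubleton_eq_iff)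
qed

lemma forest_edge_not_reach:
  assumes "is_forest_graph F" "{a,b} \<in> edges F"
  shows "\<not> reach (edges F - {{a,b}}) a b"
proof -
  have "a \<noteq> b" using forest_edge_verts[OF assms] by simp
  moreover have "\<forall>u v. {u, v} \<in> edges F \<longrightarrow> u \<noteq> v \<longrightarrow> \<not> reach (edges F - {{u, v}}) u v"
    using assms(1) unfolding is_forest_graph_def by (elim conjE)
  ultimately show ?thesis using assms(2) by blast
qed

lemma forest_edge_other_end:
  assumes "is_forest_graph F" "e \<in> edges F" "c \<in> e"
  shows "\<exists>w. e = {c, w}"
proof -
  obtain u v where "e = {u, v}"
    using assms(1,2) unfolding is_forest_graph_def by (elim conjE) (drule bspec, assumption, blast)
  then show ?thesis using assms(3) by (auto simp: insert_commute)
qed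

lemma xforest_forest: "xforest X F \<Longrightarrow> is_forest_graph F"
  unfolding xforest_def by simp

lemma xforest_finite_verts: "xforest X F \<Longrightarrow> finite (verts F)"
  unfolding xforest_def is_forest_graph_def by simp

lemma xforest_degree_ge_3:
  "xforest X F \<Longrightarrow> v \<in> verts F \<Longrightarrow> \<not> labeled X F v \<Longrightarrow> degree F v \<ge> 3"
  unfolding xforest_def by (elim conjE) (drule bspec, assumption, simp)

lemma forest_degree_eq_card_neighbours:
  assumes F: "is_forest_graph F"
  shows "degree F c = card {w. {c,w} \<in> edges F}"
proof -
  let ?N = "{w. {c,w} \<in> edges F}"
  have "{e \<in> edges F. c \<in> e} = (\<lambda>w. {c,w}) ` ?N"
  proof (rule set_eqI, rule iffI)
    fix e assume "e \<in> {e \<in> edges F. c \<in> e}"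
    then obtain w where "e = {c,w}" "e \<in> edges F" using forest_edge_other_end[OF F] by blast
    then show "e \<in> (\<lambda>w. {c,w}) ` ?N" by blast
  qed blast
  moreover have "inj_on (\<lambda>w. {c,w}) ?N"
    using forest_edge_verts[OF F] by (auto intro!: inj_onI simp: doubleton_eq_iff)
  ultimately show ?thesis unfolding degree_def by (simp add: card_image)
qed

text \<open>A repeated vertex on a walk that never turns back closes a cycle through its first
  edge, which acyclicity forbids.\<close>

lemma forest_nonbacktracking_walk_inj:
  assumes F: "is_forest_graph F"
    and walk: "\<And>k. {s k, s (Suc k)} \<in> edges F"
    and nonback: "\<And>k. s (Suc (Suc k)) \<noteq> s k"
  shows "inj s"
proof (rule ccontr)
  have neq: "s (Suc k) \<noteq> s k" for k using forest_edge_verts[OF F walk[of k]] by auto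
  assume "\<not> inj s"
  then obtain i j where ij: "s i = s j" "i \<noteq> j" unfolding inj_def by blast
  have "min i j < max i j" "s (min i j) = s (max i j)" using ij by (auto simp: min_def max_def)
  then have "\<exists>j. \<exists>i<j. s i = s j" by blast
  define j0 where "j0 = (LEAST j. \<exists>i<j. s i = s j)"
  obtain i0 where i0: "i0 < j0" "s i0 = s j0"
    using LeastI_ex[OF \<open>\<exists>j. \<exists>i<j. s i = s j\<close>] unfolding j0_def by blast
  have mini: "\<And>j i. j < j0 \<Longrightarrow> i < j \<Longrightarrow> s i \<noteq> s j"
    unfolding j0_def using not_less_Least by blast
  define e where "e = {s i0, s (Suc i0)}"
  have "Suc i0 + m \<le> j0 \<longrightarrow> reach (edges F - {e}) (s (Suc i0)) (s (Suc i0 + m))" for m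
  proof (induction m)
    case 0
    then show ?case by (simp add: reach_refl)
  next
    case (Suc m)
    show ?case
    proof
      assume le: "Suc i0 + Suc m \<le> j0"
      define k where "k = Suc i0 + m"
      have r: "reach (edges F - {e}) (s (Suc i0)) (s k)" using Suc le unfolding k_def by simp
      have "{s k, s (Suc k)} \<noteq> e"
      proof (cases m)
        case 0
        then have "k = Suc i0" unfolding k_def by simp
        then have "s (Suc k) \<notin> e" using neq[of "Suc i0"] nonback[of i0] unfolding e_def by auto
        then show ?thesis by blast
      next
        case (Suc m')
        then have "s k \<notin> e" using mini[of k i0] mini[of k "Suc i0"] le unfolding k_def e_def by auto
        then show ?thesis by blast
      qed
      then have "reach (edges F - {e}) (s (Suc i0)) (s (Suc k))"
        using reach_snoc[OF r, of "s (Suc k)"] walk[of k] neq[of k] by auto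
      then show "reach (edges F - {e}) (s (Suc i0)) (s (Suc i0 + Suc m))" unfolding k_def by simp
    qed
  qed
  from this[of "j0 - Suc i0"] have "reach (edges F - {e}) (s (Suc i0)) (s i0)"
    using i0 by simp
  then show False
    using forest_edge_not_reach[OF F, of "s (Suc i0)" "s i0"] walk[of i0]
    unfolding e_def by (simp add: insert_commute)
qed

lemma forest_finite_set_has_vertex_with_one_neighbour:
  assumes F: "is_forest_graph F" and U: "finite U" "U \<noteq> {}"
  shows "\<exists>c\<in>U. \<exists>q. \<forall>w\<in>U. {c,w} \<in> edges F \<longrightarrow> w = q"
proof (rule ccontr)
  assume "\<not> ?thesis"
  then have "\<forall>q. \<exists>h. \<forall>c. c \<in> U \<longrightarrow> h c \<in> U \<and> {c, h c} \<in> edges F \<and> h c \<noteq> q"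
    by (intro allI choice) blast
  then have "\<exists>nx. \<forall>q c. c \<in> U \<longrightarrow> nx q c \<in> U \<and> {c, nx q c} \<in> edges F \<and> nx q c \<noteq> q"
    by (rule choice)
  then obtain nx where nx: "\<And>q c. c \<in> U \<Longrightarrow> nx q c \<in> U \<and> {c, nx q c} \<in> edges F \<and> nx q c \<noteq> q"
    by blast
  obtain t0 where t0: "t0 \<in> U" using U(2) by blast
  define pair where "pair k = ((\<lambda>(a, b). (b, nx a b)) ^^ k) (t0, nx t0 t0)" for k
  define s where "s k = fst (pair k)" for k
  have s_Suc: "s (Suc k) = snd (pair k)" for k
    unfolding s_def pair_def by (simp add: case_prod_beta)
  have s_Suc_Suc: "s (Suc (Suc k)) = nx (s k) (s (Suc k))" for k
    unfolding s_Suc by (simp add: pair_def s_def case_prod_beta)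
  have walk: "s k \<in> U \<and> s (Suc k) \<in> U \<and> {s k, s (Suc k)} \<in> edges F" for k
  proof (induction k)
    case 0
    then show ?case using nx[OF t0] t0 s_Suc[of 0] by (simp add: s_def pair_def)
  next
    case (Suc k)
    then show ?case using s_Suc_Suc[of k] nx[of "s (Suc k)" "s k"] by simp
  qed
  have "inj s"
    by (rule forest_nonbacktracking_walk_inj[OF F]) (use walk s_Suc_Suc nx in auto)
  moreover have "finite (range s)" using walk U(1) by (meson finite_subset image_subsetI)
  ultimately show False using finite_imageD infinite_UNIV_nat by blast
qed

text \<open>The fixed neighbours a, b of a moved vertex c would close the cycle c b (g c) a.\<close>

lemma forest_automorphism_fixes_at_most_one_neighbour:
  assumes F: "is_forest_graph F" and inj: "inj_on g (verts F)"
    and gE: "\<And>a b. {a,b} \<in> edges F \<Longrightarrow> {g a, g b} \<in> edges F"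
    and c: "c \<in> verts F" "g c \<noteq> c"
    and a: "{c,a} \<in> edges F" "g a = a" and b: "{c,b} \<in> edges F" "g b = b"
  shows "a = b"
proof (rule ccontr)
  assume ab: "a \<noteq> b"
  have aV: "a \<in> verts F" "c \<noteq> a" using forest_edge_verts[OF F a(1)] by simp_all
  have bV: "b \<in> verts F" "c \<noteq> b" using forest_edge_verts[OF F b(1)] by simp_all
  have gca: "{g c, a} \<in> edges F" using gE[OF a(1)] unfolding a(2) .
  have gcb: "{b, g c} \<in> edges F" using gE[OF b(1)] unfolding b(2) insert_commute[of "g c"] .
  have gc_a: "g c \<noteq> a" using inj_onD[OF inj _ c(1) aV(1)] aV(2) unfolding a(2) by blast
  have gc_b: "g c \<noteq> b" using inj_onD[OF inj _ c(1) bV(1)] bV(2) unfolding b(2) by blast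
  let ?E = "edges F - {{c,a}}"
  have "reach ?E c b"
    by (rule reach_snoc[OF reach_refl]) (use b(1) ab bV(2) in \<open>auto simp: doubleton_eq_iff\<close>)
  then have "reach ?E c (g c)"
    by (rule reach_snoc) (use gcb bV(2) ab gc_b in \<open>auto simp: doubleton_eq_iff\<close>)
  then have "reach ?E c a"
    by (rule reach_snoc) (use gca c(2) gc_a in \<open>auto simp: doubleton_eq_iff\<close>)
  then show False using forest_edge_not_reach[OF F a(1)] by simp
qed

locale label_automorphism =
  fixes X F g
  assumes F: "xforest X F" and bij: "bij_betw g (verts F) (verts F)"
    and edges_eq: "edges F = (\<lambda>e. g ` e) ` edges F"
    and fixes_labels: "\<forall>y\<in>X. g (lab F y) = lab F y"
begin

lemma moved_vertex_has_moved_neighbour: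
  assumes c: "c \<in> verts F" "g c \<noteq> c"
  shows "\<exists>w\<in>verts F. g w \<noteq> w \<and> {c,w} \<in> edges F \<and> w \<noteq> q"
proof -
  have fg: "is_forest_graph F" using F by (rule xforest_forest)
  have inj: "inj_on g (verts F)" using bij unfolding bij_betw_def by blast
  have gE: "{g a, g b} \<in> edges F" if "{a,b} \<in> edges F" for a b
  proof -
    have "g ` {a,b} \<in> (\<lambda>e. g ` e) ` edges F" using that by blast
    then show ?thesis by (simp add: edges_eq[symmetric])
  qed
  have "\<not> labeled X F c"
  proof
    assume "labeled X F c"
    then obtain y where "y \<in> X" "c = lab F y" unfolding labeled_def by blast
    then show False using fixes_labels c(2) by simp
  qed
  then have deg: "degree F c \<ge> 3" using xforest_degree_ge_3[OF F c(1)] by simp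
  define N where "N = {w. {c,w} \<in> edges F}"
  define Fx where "Fx = {w. g w = w}"
  have NV: "N \<subseteq> verts F" unfolding N_def using forest_edge_verts[OF fg, of c] by auto
  then have finN: "finite N" using xforest_finite_verts[OF F] by (rule finite_subset)
  have cardN: "card N \<ge> 3" using deg unfolding forest_degree_eq_card_neighbours[OF fg] N_def .
  have "\<forall>a\<in>N \<inter> Fx. \<forall>b\<in>N \<inter> Fx. a = b"
    using forest_automorphism_fixes_at_most_one_neighbour[OF fg inj gE c] unfolding N_def Fx_def by blast
  then have fixed_le_1: "card (N \<inter> Fx) \<le> 1" using finN by (simp add: card_le_Suc0_iff_eq)
  have "N - {q} - Fx \<noteq> {}"
  proof
    assume "N - {q} - Fx = {}"
    then have "N \<subseteq> insert q (N \<inter> Fx)" by blast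
    then have "card N \<le> card (insert q (N \<inter> Fx))" using finN by (intro card_mono) auto
    also have "\<dots> \<le> Suc (card (N \<inter> Fx))" using finN by (simp add: card_insert_if)
    finally show False using cardN fixed_le_1 by simp
  qed
  then show ?thesis using NV unfolding N_def Fx_def by blast
qed

text \<open>A leaf-labelled forest has no nontrivial label-preserving automorphism: the moved
  vertices would span a finite subforest without leaves.\<close>

lemma fixes_verts:
  assumes "t \<in> verts F"
  shows "g t = t"
proof (rule ccontr)
  let ?U = "{t \<in> verts F. g t \<noteq> t}"
  assume "g t \<noteq> t"
  then have "?U \<noteq> {}" using assms by blast
  moreover have "finite ?U" using xforest_finite_verts[OF F] by simp
  ultimately obtain c q where c: "c \<in> ?U" and q: "\<forall>w\<in>?U. {c,w} \<in> edges F \<longrightarrow> w = q"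
    by (metis (no_types, lifting) forest_finite_set_has_vertex_with_one_neighbour xforest_forest[OF F])
  obtain w where "w \<in> ?U" "{c,w} \<in> edges F" "w \<noteq> q"
    using moved_vertex_has_moved_neighbour[of c q] c by blast
  then show False using q by blast
qed

end
lemma subdiv_attach_swap: "subdiv_attach F p u1 u2 z = subdiv_attach F p u2 u1 z"
  unfolding subdiv_attach_def by (simp add: insert_commute)

text \<open>The situation of the theorem: p is an isolated labelled vertex of the forest F
  (the vertex x of F_ijk), and S is obtained by hanging p from a new vertex z
  subdividing the edge u1 u2.\<close>

locale isolated_leaf_attachment =
  fixes X F p u1 u2 z
  assumes F: "xforest X F" and p_label: "p \<in> lab F ` X"
    and p_isolated: "\<forall>e\<in>edges F. p \<notin> e"
    and u_edge: "{u1,u2} \<in> edges F" and z_fresh: "z \<notin> verts F"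
begin

lemma F_wf: "wf_xf X F" using F by (rule xforest_wf_xf)
lemma p_vert: "p \<in> verts F" using F_wf p_label unfolding wf_xf_def by blast
lemma u_verts: "u1 \<in> verts F" "u2 \<in> verts F" "u1 \<noteq> u2" using forest_edge_verts[OF xforest_forest[OF F] u_edge] by auto
lemma p_ne_u: "p \<noteq> u1" "p \<noteq> u2" using p_isolated u_edge by auto
lemma z_ne: "z \<noteq> p" "z \<noteq> u1" "z \<noteq> u2" using z_fresh p_vert u_verts by auto
lemma lab_vert: "y \<in> X \<Longrightarrow> lab F y \<in> verts F" using F_wf unfolding wf_xf_def by blast
lemma edge_verts: "e \<in> edges F \<Longrightarrow> e \<subseteq> verts F" using F_wf unfolding wf_xf_def by blast
lemma finite_edges_F: "finite (edges F)" using F_wf by (rule wf_xf_finite_edges)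

abbreviation "S \<equiv> subdiv_attach F p u1 u2 z"

lemma S_wf: "wf_xf X S"
  using F_wf p_vert u_verts unfolding wf_xf_def subdiv_attach_simps by auto

lemma new_edges_not_in_F: "{u1,z} \<notin> edges F" "{z,u2} \<notin> edges F" "{z,p} \<notin> edges F"
  using edge_verts z_fresh by blast+

lemma card_edges_S: "card (edges S) = card (edges F) + 2"
proof -
  have d: "(edges F - {{u1, u2}}) \<inter> {{u1, z}, {z, u2}, {z, p}} = {}" using new_edges_not_in_F by auto
  have c3: "card {{u1, z}, {z, u2}, {z, p}} = 3"
    using u_verts(3) p_ne_u z_ne by (auto simp: doubleton_eq_iff card_insert_if)
  have "card (edges F - {{u1, u2}}) = card (edges F) - 1" using finite_edges_F u_edge by simp
  moreover have "card (edges F) \<ge> 1" using finite_edges_F u_edge by (metis One_nat_def card_0_eq empty_iff less_one not_less)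
  moreover have "card (edges S) = card (edges F - {{u1,u2}}) + card {{u1, z}, {z, u2}, {z, p}}"
    unfolding subdiv_attach_simps by (rule card_Un_disjoint) (use finite_edges_F d in auto)
  ultimately show ?thesis using c3 by simp
qed

lemma card_edges_add_edge: "card (edges (add_edge F p v)) = card (edges F) + 1"
proof -
  have "{p,v} \<notin> edges F" using p_isolated by blast
  then show ?thesis unfolding add_edge_simps using finite_edges_F by simp
qed

lemma wf_add_edge: "v \<in> verts F \<Longrightarrow> wf_xf X (add_edge F p v)"
  using F_wf p_vert unfolding wf_xf_def add_edge_simps by auto

lemma add_edge_edges_at_p: "{e \<in> edges (add_edge F p v). p \<in> e} = {{p,v}}"
  unfolding add_edge_simps using p_isolated by auto

lemma S_edges_at_z: "{e \<in> edges S. z \<in> e} = {{u1, z}, {z, u2}, {z, p}}"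
  unfolding subdiv_attach_simps using edge_verts z_fresh by auto

lemma S_z_unlabeled: "\<not> labeled X S z"
  unfolding labeled_def subdiv_attach_simps using lab_vert z_fresh by auto

lemma degree_S_z: "degree S z = 3"
  unfolding degree_def S_edges_at_z using u_verts(3) p_ne_u z_ne by (auto simp: doubleton_eq_iff card_insert_if)

lemma contract_S_u1_z_iso: "iso_via X id (add_edge F p u1) (contract S u1 z)"
proof -
  define r where "r = (\<lambda>w. if w = z then u1 else w)"
  have ES: "edges S - {{u1,z}} = (edges F - {{u1, u2}}) \<union> {{z, u2}, {z, p}}"
    unfolding subdiv_attach_simps using new_edges_not_in_F u_verts(3) p_ne_u z_ne by (auto simp: doubleton_eq_iff)
  have rF: "\<And>e. e \<in> edges F \<Longrightarrow> r ` e = e" unfolding r_def using edge_verts z_fresh by force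
  have "(\<lambda>e. r ` e) ` (edges S - {{u1,z}}) = (\<lambda>e. r ` e) ` (edges F - {{u1, u2}}) \<union> {{u1, u2}, {u1, p}}"
    unfolding ES r_def using z_ne by auto
  also have "(\<lambda>e. r ` e) ` (edges F - {{u1, u2}}) = edges F - {{u1, u2}}"
    using rF by (simp add: image_cong[OF refl rF])
  finally have "edges (contract S u1 z) = insert {p,u1} (edges F)"
    unfolding contract_simps r_def[symmetric] using u_edge by (auto simp: insert_commute)
  moreover have "verts (contract S u1 z) = verts F" unfolding contract_simps subdiv_attach_simps using z_fresh by auto
  moreover have "\<forall>y\<in>X. lab (contract S u1 z) y = lab F y"
    unfolding contract_simps subdiv_attach_simps using lab_vert z_fresh by auto
  ultimately show ?thesis unfolding iso_via_def add_edge_simps by (simp add: bij_betw_id)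
qed

lemma not_iso_add_edge_if_p_pendant:
  assumes v: "v \<in> verts F" "v \<noteq> p"
    and G: "wf_xf X G" "iso_via X k G (add_edge F p v)"
    and pG: "p \<in> verts G" and zG: "z \<in> verts G" and x: "x \<in> X" "lab G x = p" "lab F x = p"
    and atp: "{e\<in>edges G. p \<in> e} = {{z,p}}"
    and zl: "\<not> labeled X G z" and dz: "degree G z \<le> 3"
  shows False
proof -
  have b: "bij_betw k (verts G) (verts F)" and l: "\<forall>y\<in>X. k (lab G y) = lab F y"
    using G(2) unfolding iso_via_def add_edge_simps by auto
  have inj: "inj_on k (verts G)" using b bij_betw_def by blast
  have kp: "k p = p" using l x by auto
  have "{{p,v}} = (\<lambda>e. k ` e) ` {{z,p}}"
    using iso_via_edges_at[OF G pG] unfolding kp add_edge_edges_at_p atp by simp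
  then have "{p,v} = {k z, p}" using kp by simp
  moreover have "k z \<noteq> p" using inj zG pG z_ne(1) kp by (metis inj_on_eq_iff)
  ultimately have kz: "k z = v" by (auto simp: doubleton_eq_iff)
  have "\<not> labeled X (add_edge F p v) v" using iso_via_labeled[OF G zG] zl kz by simp
  then have "\<not> labeled X F v" unfolding labeled_def add_edge_simps .
  then have d3: "degree F v \<ge> 3" using xforest_degree_ge_3[OF F v(1)] by simp
  have "{e \<in> edges (add_edge F p v). v \<in> e} = insert {p,v} {e \<in> edges F. v \<in> e}"
    unfolding add_edge_simps by auto
  moreover have "{p,v} \<notin> {e \<in> edges F. v \<in> e}" using p_isolated by auto
  moreover have "finite {e \<in> edges F. v \<in> e}" using finite_edges_F by simp
  ultimately have "degree (add_edge F p v) v = degree F v + 1" unfolding degree_def by simp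
  moreover have "degree (add_edge F p v) (k z) = degree G z" using iso_via_degree[OF G zG] .
  ultimately show False using d3 dz kz by simp
qed

lemma add_edge_iso_imp_eq:
  assumes u: "u \<in> verts F" "u \<noteq> p" and v: "v \<in> verts F" "v \<noteq> p"
    and g: "iso_via X g (add_edge F p u) (add_edge F p v)"
  shows "u = v"
proof -
  have wu: "wf_xf X (add_edge F p u)" using wf_add_edge u(1) .
  have b: "bij_betw g (verts F) (verts F)" and l: "\<forall>y\<in>X. g (lab F y) = lab F y"
    and e: "insert {p,v} (edges F) = (\<lambda>e. g ` e) ` insert {p,u} (edges F)"
    using g unfolding iso_via_def add_edge_simps by auto
  have inj: "inj_on g (verts F)" using b bij_betw_def by blast
  have gp: "g p = p" using l p_label by auto
  have pVu: "p \<in> verts (add_edge F p u)" using p_vert by (simp add: add_edge_simps)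
  have "{{p,v}} = (\<lambda>e. g ` e) ` {{p,u}}"
    using iso_via_edges_at[OF wu g pVu] unfolding gp add_edge_edges_at_p by simp
  then have "{p,v} = {p, g u}" using gp by simp
  moreover have "g u \<noteq> p" using inj u p_vert gp by (metis inj_on_eq_iff)
  ultimately have gu: "g u = v" by (auto simp: doubleton_eq_iff)
  have n1: "{p,v} \<notin> edges F" using p_isolated by auto
  have n2: "{p,v} \<notin> (\<lambda>e. g ` e) ` edges F"
  proof
    assume "{p,v} \<in> (\<lambda>e. g ` e) ` edges F"
    then obtain e where e1: "e \<in> edges F" "g ` e = {p,v}" by blast
    have "g ` {p,u} = {p,v}" using gp gu by simp
    then have "g ` e = g ` {p,u}" using e1 by simp
    moreover have sub2: "{p,u} \<subseteq> verts F" using p_vert u(1) by simp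
    ultimately have "e = {p,u}" using inj_on_image_eq_iff[OF inj edge_verts[OF e1(1)] sub2] by blast
    then show False using e1 p_isolated by auto
  qed
  have "insert {p,v} (edges F) = insert {p,v} ((\<lambda>e. g ` e) ` edges F)"
    using e gp gu by simp
  then have EE: "edges F = (\<lambda>e. g ` e) ` edges F" using n1 n2 by (simp add: insert_ident)
  have "\<forall>t\<in>verts F. g t = t" using label_automorphism.fixes_verts[OF label_automorphism.intro[OF F b EE l]] by blast
  then show ?thesis using gu u(1) by simp
qed


lemma S_edge_cases:
  "e \<in> edges S \<Longrightarrow> (e \<in> edges F \<and> e \<noteq> {u1,u2}) \<or> e = {u1,z} \<or> e = {z,u2} \<or> e = {z,p}"
  unfolding subdiv_attach_simps by auto

lemma S_edge_at_p: assumes e: "e \<in> edges S" "p \<in> e" shows "e = {z,p}"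
proof -
  have "e \<notin> edges F" using p_isolated e(2) by blast
  then have "e = {u1,z} \<or> e = {z,u2} \<or> e = {z,p}" using S_edge_cases[OF e(1)] by blast
  moreover have "p \<notin> {u1,z}" "p \<notin> {z,u2}" using p_ne_u z_ne by auto
  ultimately show ?thesis using e(2) by blast
qed

lemma S_edges_at_p: "{e \<in> edges S. p \<in> e} = {{z,p}}"
proof -
  have "{z,p} \<in> edges S" by (simp add: subdiv_attach_simps)
  then show ?thesis using S_edge_at_p by blast
qed

lemma contract_S_old_edge_not_iso:
  assumes v: "v \<in> verts F" "v \<noteq> p" and x: "x \<in> X" "lab F x = p"
    and st: "{s,t} \<in> edges F" "{s,t} \<noteq> {u1,u2}" "s \<noteq> t"
    and k: "iso_via X k (contract S s t) (add_edge F p v)"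
  shows False
proof -
  have sF: "s \<in> verts F" "t \<in> verts F" using edge_verts[OF st(1)] by auto
  have ps: "p \<noteq> s" "p \<noteq> t" using p_isolated st(1) by auto
  have zs: "z \<noteq> s" "z \<noteq> t" using sF z_fresh by auto
  have finS: "finite (edges S)" using S_wf by (rule wf_xf_finite_edges)
  have wG: "wf_xf X (contract S s t)"
    by (rule wf_xf_contract[OF S_wf]) (use sF st in \<open>auto simp: subdiv_attach_simps\<close>)
  have pG: "p \<in> verts (contract S s t)" and zG: "z \<in> verts (contract S s t)"
    and lx: "lab (contract S s t) x = p"
    using p_vert ps zs x by (simp_all add: contract_simps subdiv_attach_simps)
  have "{e \<in> edges S - {{s,t}}. p \<in> e} = {{z,p}}"
    using S_edges_at_p zs by (auto simp: doubleton_eq_iff)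
  then have atp: "{e \<in> edges (contract S s t). p \<in> e} = {{z,p}}"
    unfolding contract_edges_at_other[OF ps] using ps zs by auto
  have zl: "\<not> labeled X (contract S s t) z"
    using lab_vert sF z_fresh unfolding labeled_def by (auto simp: contract_simps subdiv_attach_simps)
  have "degree (contract S s t) z \<le> card {e \<in> edges S - {{s,t}}. z \<in> e}"
    unfolding degree_def contract_edges_at_other[OF zs] using finS by (intro card_image_le) simp
  also have "\<dots> \<le> degree S z" unfolding degree_def using finS by (intro card_mono) auto
  finally have "degree (contract S s t) z \<le> 3" using degree_S_z by simp
  then show False using not_iso_add_edge_if_p_pendant[OF v wG k pG zG x(1) lx x(2) atp zl] by simp
qed

lemma delete_S_old_edge_not_iso:
  assumes v: "v \<in> verts F" "v \<noteq> p" and x: "x \<in> X" "lab F x = p"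
    and st: "{s,t} \<in> edges F" "{s,t} \<noteq> {u1,u2}"
    and k: "iso_via X k (delete S s t) (add_edge F p v)"
  shows False
proof -
  have zs: "z \<noteq> s" "z \<noteq> t" using edge_verts[OF st(1)] z_fresh by auto
  have finS: "finite (edges S)" using S_wf by (rule wf_xf_finite_edges)
  have wG: "wf_xf X (delete S s t)" by (rule wf_xf_delete[OF S_wf])
  have pG: "p \<in> verts (delete S s t)" and zG: "z \<in> verts (delete S s t)"
    and lx: "lab (delete S s t) x = p"
    using p_vert x by (simp_all add: delete_simps subdiv_attach_simps)
  have atp: "{e \<in> edges (delete S s t). p \<in> e} = {{z,p}}"
    using S_edges_at_p zs by (auto simp: delete_simps doubleton_eq_iff)
  have zl: "\<not> labeled X (delete S s t) z"
    using S_z_unlabeled unfolding labeled_def delete_simps .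
  have "degree (delete S s t) z \<le> degree S z"
    unfolding degree_def delete_simps using finS by (intro card_mono) auto
  then have "degree (delete S s t) z \<le> 3" using degree_S_z by simp
  then show False using not_iso_add_edge_if_p_pendant[OF v wG k pG zG x(1) lx x(2) atp zl] by simp
qed

lemma contract_S_zp_not_iso:
  assumes v: "v \<in> verts F" "v \<noteq> p" and x: "x \<in> X" "lab F x = p"
    and k: "iso_via X k (contract S z p) (add_edge F p v)"
  shows False
proof -
  define r where "r = (\<lambda>w. if w = p then z else w)"
  have wG: "wf_xf X (contract S z p)" by (rule wf_xf_contract[OF S_wf]) (use z_ne in \<open>auto simp: subdiv_attach_simps\<close>)
  have zG: "z \<in> verts (contract S z p)" using z_ne by (simp add: contract_simps subdiv_attach_simps)
  have lx: "lab (contract S z p) x = z" using x by (simp add: contract_simps subdiv_attach_simps)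
  have b: "bij_betw k (verts (contract S z p)) (verts F)" and l: "\<forall>y\<in>X. k (lab (contract S z p) y) = lab F y"
    using k unfolding iso_via_def add_edge_simps by auto
  have kz: "k z = p" using l x lx by auto
  have e1: "{u1,z} \<in> edges (contract S z p)"
  proof -
    have "{u1,z} \<in> edges S - {{z,p}}" using p_ne_u z_ne by (auto simp: subdiv_attach_simps doubleton_eq_iff)
    moreover have "r ` {u1,z} = {u1,z}" unfolding r_def using p_ne_u z_ne by auto
    ultimately have "{u1,z} \<in> (\<lambda>e. r ` e) ` (edges S - {{z,p}})" by (metis image_eqI)
    then show ?thesis unfolding contract_simps r_def .
  qed
  have e2: "{z,u2} \<in> edges (contract S z p)"
  proof -
    have "{z,u2} \<in> edges S - {{z,p}}" using p_ne_u z_ne by (auto simp: subdiv_attach_simps doubleton_eq_iff)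
    moreover have "r ` {z,u2} = {z,u2}" unfolding r_def using p_ne_u z_ne by auto
    ultimately have "{z,u2} \<in> (\<lambda>e. r ` e) ` (edges S - {{z,p}})" by (metis image_eqI)
    then show ?thesis unfolding contract_simps r_def .
  qed
  have "{{u1,z},{z,u2}} \<subseteq> {e\<in>edges (contract S z p). z \<in> e}" using e1 e2 by auto
  moreover have "finite {e\<in>edges (contract S z p). z \<in> e}" using wf_xf_finite_edges[OF wG] by simp
  moreover have "card {{u1,z},{z,u2}} = 2" using u_verts(3) by (auto simp: doubleton_eq_iff)
  ultimately have "degree (contract S z p) z \<ge> 2" unfolding degree_def by (metis card_mono)
  moreover have "degree (add_edge F p v) (k z) = degree (contract S z p) z" using iso_via_degree[OF wG k zG] .
  moreover have "degree (add_edge F p v) p = 1" unfolding degree_def add_edge_edges_at_p by simp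
  ultimately show False using kz by simp
qed

lemma safe_del_S_avoids_z: "safe_del X S s t \<Longrightarrow> s \<noteq> z \<and> t \<noteq> z"
  unfolding safe_del_def using S_z_unlabeled degree_S_z by auto

lemma contract_S_u1_z_iso_imp:
  assumes v: "v \<in> verts F" "v \<noteq> p"
    and k: "iso_via X k (contract S u1 z) (add_edge F p v)"
  shows "v = u1"
proof -
  have "iso_via X (k \<circ> id) (add_edge F p u1) (add_edge F p v)" by (rule iso_via_comp[OF contract_S_u1_z_iso k])
  then have "u1 = v" by (rule add_edge_iso_imp_eq[OF u_verts(1) p_ne_u(1)[symmetric] v])
  then show ?thesis by simp
qed


lemma step_S_iso_add_edge_imp:
  assumes v: "v \<in> verts F" "v \<noteq> p" and step: "step X G S"
    and iso: "fiso X G (add_edge F p v)"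
  shows "v \<in> {u1,u2}"
proof -
  interpret swapped: isolated_leaf_attachment X F p u2 u1 z
    by unfold_locales (use F p_label p_isolated u_edge z_fresh in \<open>simp_all add: insert_commute\<close>)
  obtain x where x: "x \<in> X" "lab F x = p" using p_label by blast
  obtain s t where st: "s \<noteq> t" "{s,t} \<in> edges S"
      "G = contract S s t \<or> (safe_del X S s t \<and> G = delete S s t)"
    using step unfolding step_def by blast
  have z_S: "z \<in> verts S" and u_S: "u1 \<in> verts S" "u2 \<in> verts S" and p_S: "p \<in> verts S"
    using u_verts p_vert by (simp_all add: subdiv_attach_simps)
  show ?thesis
  proof (cases "safe_del X S s t \<and> G = delete S s t")
    case True
    then have "z \<notin> {s,t}" using safe_del_S_avoids_z[of s t] by blast
    then have "{s,t} \<in> edges F" "{s,t} \<noteq> {u1,u2}" using S_edge_cases[OF st(2)] by blast+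
    then show ?thesis
      using delete_S_old_edge_not_iso[OF v x] iso True unfolding fiso_iff_iso_via by blast
  next
    case False
    then have iso_c: "fiso X (contract S s t) (add_edge F p v)" using st(3) iso by auto
    consider (old) "{s,t} \<in> edges F" "{s,t} \<noteq> {u1,u2}" | (u1) "{s,t} = {u1,z}"
      | (u2) "{s,t} = {u2,z}" | (p) "{s,t} = {z,p}"
      using S_edge_cases[OF st(2)] by (auto simp: insert_commute)
    then show ?thesis
    proof cases
      case old
      then show ?thesis
        using contract_S_old_edge_not_iso[OF v x old st(1)] iso_c unfolding fiso_iff_iso_via by blast
    next
      case u1
      then have "fiso X (contract S u1 z) (add_edge F p v)"
        using fiso_contract_doubleton[OF _ u_S(1) z_S _ iso_c] z_ne(2) by simp
      then show ?thesis using contract_S_u1_z_iso_imp[OF v] unfolding fiso_iff_iso_via by blast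
    next
      case u2
      then have "fiso X (contract S u2 z) (add_edge F p v)"
        using fiso_contract_doubleton[OF _ u_S(2) z_S _ iso_c] z_ne(3) by simp
      then show ?thesis
        using swapped.contract_S_u1_z_iso_imp[OF v] unfolding fiso_iff_iso_via subdiv_attach_swap[of F p u2]
        by blast
    next
      case p
      then have "fiso X (contract S z p) (add_edge F p v)"
        using fiso_contract_doubleton[OF _ z_S p_S _ iso_c] z_ne(1) by simp
      then show ?thesis using contract_S_zp_not_iso[OF v x] unfolding fiso_iff_iso_via by blast
    qed
  qed
qed

lemma contract_S_end_step:
  assumes "v \<in> {u1,u2}"
  shows "step X (contract S v z) S" "fiso X (contract S v z) (add_edge F p v)"
proof -
  interpret swapped: isolated_leaf_attachment X F p u2 u1 z
    by unfold_locales (use F p_label p_isolated u_edge z_fresh in \<open>simp_all add: insert_commute\<close>)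
  have "{v,z} \<in> edges S" "v \<noteq> z" using assms z_ne by (auto simp: subdiv_attach_simps insert_commute)
  then show "step X (contract S v z) S" unfolding step_def by blast
  have "iso_via X id (add_edge F p v) (contract S v z)"
    using assms contract_S_u1_z_iso swapped.contract_S_u1_z_iso
    unfolding subdiv_attach_swap[of F p u2] by auto
  then show "fiso X (contract S v z) (add_edge F p v)"
    using fiso_sym[OF wf_add_edge] u_verts assms unfolding fiso_iff_iso_via by blast
qed

theorem hcovers_iff_attached_at_subdivided_edge:
  assumes C: "xforest X C" "fiso X C S" and Q: "xforest X Q" "fiso X Q (add_edge F p v)"
    and v: "v \<in> verts F" "v \<noteq> p"
  shows "hcovers X (Elem C) (Elem Q) \<longleftrightarrow> v \<in> {u1,u2}"
proof -
  have C_wf: "wf_xf X C" and Q_wf: "wf_xf X Q" using C(1) Q(1) by (simp_all add: xforest_wf_xf)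
  have card_C: "card (edges C) = Suc (card (edges Q))"
    using fiso_card_edges[OF C_wf C(2)] fiso_card_edges[OF Q_wf Q(2)]
      card_edges_S card_edges_add_edge[of v] by simp
  show ?thesis
  proof
    assume "hcovers X (Elem C) (Elem Q)"
    then have "fle X Q C" unfolding hcovers_def hlt_def by simp
    then obtain G where G: "step X G C" "fiso X G Q"
      using fle_card_edges_Suc_imp_step[OF C_wf _ card_C] by blast
    obtain f where "iso_via X f C S" using C(2) unfolding fiso_iff_iso_via by blast
    then obtain G' where G': "step X G' S" "iso_via X f G G'"
      using step_transfer_iso[OF C_wf _ G(1)] by blast
    have "wf_xf X G" using step_wf_card_edges_less[OF G(1) C_wf] by simp
    then have "fiso X G' G" using G'(2) fiso_sym unfolding fiso_iff_iso_via by blast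
    then have "fiso X G' (add_edge F p v)" using G(2) Q(2) fiso_trans by blast
    then show "v \<in> {u1,u2}" by (rule step_S_iso_add_edge_imp[OF v G'(1)])
  next
    assume end_vertex: "v \<in> {u1,u2}"
    obtain f where "iso_via X f S C" using fiso_sym[OF C_wf C(2)] unfolding fiso_iff_iso_via by blast
    then obtain G where G: "step X G C" "iso_via X f (contract S v z) G"
      using step_transfer_iso[OF S_wf _ contract_S_end_step(1)[OF end_vertex]] by blast
    have "wf_xf X (contract S v z)"
      using step_wf_card_edges_less[OF contract_S_end_step(1)[OF end_vertex] S_wf] by simp
    then have "fiso X G (contract S v z)" using G(2) fiso_sym unfolding fiso_iff_iso_via by blast
    then have "fiso X G Q"
      using contract_S_end_step(2)[OF end_vertex] fiso_sym[OF Q_wf Q(2)] fiso_trans by blast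
    then have "fle X Q C" unfolding fle_def using G(1) by blast
    then show "hcovers X (Elem C) (Elem Q)" by (rule hcovers_if_fle_card_edges_Suc[OF C(1) Q(1) _ card_C])
  qed
qed

end

lemma contract_delete_isolates_leaf:
  assumes leaf: "degree H p = 1" "{p, w} \<in> edges H" "p \<noteq> w"
    and a: "p \<noteq> a" "w \<noteq> a"
  shows "\<forall>e\<in>edges (delete (contract H w a) p w). p \<notin> e"
proof
  define r where "r = (\<lambda>y. if y = a then w else y)"
  have at_p: "{e\<in>edges H. p \<in> e} = {{p,w}}"
  proof -
    obtain e' where "{e\<in>edges H. p \<in> e} = {e'}"
      using leaf(1) unfolding degree_def by (rule card_1_singletonE)
    moreover have "{p,w} \<in> {e\<in>edges H. p \<in> e}" using leaf(2) by simp
    ultimately show ?thesis by simp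
  qed
  fix e assume "e \<in> edges (delete (contract H w a) p w)"
  then have e: "e \<in> (\<lambda>e. r ` e) ` (edges H - {{w,a}})" "e \<noteq> {p,w}"
    unfolding delete_simps contract_simps r_def by auto
  then obtain e0 where e0: "e0 \<in> edges H" "e = r ` e0" by blast
  show "p \<notin> e"
  proof
    assume "p \<in> e"
    then obtain y where y: "y \<in> e0" "r y = p" using e0(2) by blast
    have "y = p" using y(2) leaf(3) unfolding r_def by (auto split: if_splits)
    then have "e0 = {p,w}" using at_p e0(1) y(1) by blast
    then have "e = {p,w}" using e0(2) a unfolding r_def by auto
    then show False using e(2) by simp
  qed
qed

lemma Fijk_isolated_label:
  assumes "critical_triplet X Ci Cj Ck x w a b"
  shows "\<forall>e\<in>edges (Fijk Ci x w a). lab (Fijk Ci x w a) x \<notin> e"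
proof -
  have leaf: "degree Ci (lab Ci x) = 1" "{lab Ci x, w} \<in> edges Ci" "lab Ci x \<noteq> w"
    and "internal_edge Ci {w, a}" "w \<noteq> a"
    using assms unfolding critical_triplet_def by simp_all
  then have "lab Ci x \<noteq> a" unfolding internal_edge_def by auto
  then have "lab (contract Ci w a) x = lab Ci x" by (simp add: contract_simps)
  then show ?thesis
    using contract_delete_isolates_leaf[OF leaf \<open>lab Ci x \<noteq> a\<close> \<open>w \<noteq> a\<close>]
    unfolding Fijk_def by (simp add: delete_simps)
qed

theorem mainTheorem7:
  fixes n :: nat and Ci Cj Ck C :: xf and A :: "xf hat" and x w a b u1 u2 z v :: nat
  assumes "n \<ge> 5"
    and "critical_triplet {1..n} Ci Cj Ck x w a b"
    and "in_CX {1..n} C" and "hlt {1..n} (Elem (Fijk Ci x w a)) (Elem C)"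
    and "{u1, u2} \<in> edges (Fijk Ci x w a)" and "u1 \<noteq> u2"
    and "z \<notin> verts (Fijk Ci x w a)"
    and "fiso {1..n} C (subdiv_attach (Fijk Ci x w a) (lab (Fijk Ci x w a) x) u1 u2 z)"
    and "in_hat {1..n} A" and "hcovers {1..n} A (Elem (Fijk Ci x w a))"
    and "v \<in> verts (Fijk Ci x w a) - {lab (Fijk Ci x w a) x}"
    and "heq {1..n} A (Elem (add_edge (Fijk Ci x w a) (lab (Fijk Ci x w a) x) v))"
  shows "hcovers {1..n} (Elem C) A \<longleftrightarrow> v \<in> {u1, u2}"
proof -
  let ?F = "Fijk Ci x w a"
  have "x \<in> {1..n}" using assms(2) unfolding critical_triplet_def by simp
  moreover have "xforest {1..n} ?F" using assms(10) unfolding hcovers_def in_hat_def by simp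
  ultimately interpret isolated_leaf_attachment "{1..n}" ?F "lab ?F x" u1 u2 z
    using Fijk_isolated_label[OF assms(2)] assms(5,7) by unfold_locales auto
  obtain Q where A: "A = Elem Q" and "fiso {1..n} Q (add_edge ?F (lab ?F x) v)"
    using assms(12) by (cases A) auto
  moreover have "xforest {1..n} Q" using assms(9) A unfolding in_hat_def by simp
  moreover have "xforest {1..n} C" using assms(3) unfolding in_CX_def by simp
  ultimately show ?thesis
    using hcovers_iff_attached_at_subdivided_edge[OF _ assms(8)] assms(11) by auto
qed

end
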